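(* For every $\delta\in(0,\tfrac1{12})$ there exists a constant $\widetilde\gamma=\widetilde\gamma(\delta)<1$, depending only on $\delta$, such that for every $d,n\in\mathbb{N}$ and every convex hull $K$ of $n$ points $x_1,\dots,x_n\in[0,1]^d$, \[ \lambda_d\bigl(K_\delta\cap[0,1]^d\bigr)\le n(d+1)\,\widetilde\gamma^{\,d}. \]
   Context: For $A\subset\mathbb{R}^d$ and $\delta>0$, $A_\delta=\{x\in\mathbb{R}^d \mid \operatorname{dist}(x,A)\le \delta\sqrt{d}\}$, where $\operatorname{dist}(x,A)=\inf_{a\in A}\|x-a\|_2$; $\lambda_d$ is $d$-dimensional Lebesgue measure. *)

theory Defs
  imports "HOL-Analysis.Analysis"
begin

text \<open>Points of R^d are represented as extensional functions nat => real on {..<d}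
  (elements of PiE {..<d} (\<lambda>_. UNIV)), so that the dimension d can be quantified
  inside the statement.\<close>

definition Rd :: "nat \<Rightarrow> (nat \<Rightarrow> real) set" where
  "Rd d = PiE {..<d} (\<lambda>_. UNIV)"

definition unit_cube :: "nat \<Rightarrow> (nat \<Rightarrow> real) set" where
  "unit_cube d = PiE {..<d} (\<lambda>_. {0..1})"

definition dist_d :: "nat \<Rightarrow> (nat \<Rightarrow> real) \<Rightarrow> (nat \<Rightarrow> real) \<Rightarrow> real" where
  "dist_d d x y = sqrt (\<Sum>j<d. (x j - y j)^2)"

text \<open>dist(x,A) \<le> r, with dist(x,A) = inf over A (= +\<infinity> for empty A).\<close>
definition setdist_le :: "nat \<Rightarrow> (nat \<Rightarrow> real) \<Rightarrow> (nat \<Rightarrow> real) set \<Rightarrow> real \<Rightarrow> bool" where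
  "setdist_le d x A r \<longleftrightarrow> (\<forall>e>0. \<exists>a\<in>A. dist_d d x a < r + e)"

definition thicken :: "nat \<Rightarrow> real \<Rightarrow> (nat \<Rightarrow> real) set \<Rightarrow> (nat \<Rightarrow> real) set" where
  "thicken d \<delta> A = {x \<in> Rd d. setdist_le d x A (\<delta> * sqrt (real d))}"

definition conv_pts :: "nat \<Rightarrow> nat \<Rightarrow> (nat \<Rightarrow> nat \<Rightarrow> real) \<Rightarrow> (nat \<Rightarrow> real) set" where
  "conv_pts d n p = {restrict (\<lambda>j. \<Sum>i<n. w i * p i j) {..<d} | w.
      (\<forall>i<n. 0 \<le> w i) \<and> (\<Sum>i<n. w i) = 1}"

definition lebesgue_d :: "nat \<Rightarrow> (nat \<Rightarrow> real) measure" where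
  "lebesgue_d d = PiM {..<d} (\<lambda>_. lborel)"

end

theory Submission
  imports Defs
begin

text \<open>
  Let \<open>c\<close> be the centre of the cube. If \<open>x \<in> [0,1]^d\<close> lies within \<open>\<surd>d/12\<close> of a point
  \<open>a\<close> of the hull, Cauchy--Schwarz with \<open>|x - c| \<le> \<surd>d/2\<close> gives \<open>\<langle>x - a, x - c\<rangle> \<le> d/24\<close>.
  The left-hand side is affine in \<open>a\<close>, so the same bound holds for one of the vertices
  \<open>x\<^sub>i\<close> in place of \<open>a\<close>. Hence \<open>K\<^sub>\<delta> \<inter> [0,1]^d\<close> is covered by the \<open>n\<close> sets
  \<open>{x \<in> [0,1]^d. \<langle>x - x\<^sub>i, x - c\<rangle> \<le> d/24}\<close>, and an exponential Markov bound with the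
  product weight \<open>\<Prod>\<^sub>j exp (1/144 - (x\<^sub>j - x\<^sub>i\<^sub>j)(x\<^sub>j - 1/2)/6)\<close> shows that each has measure
  at most \<open>\<gamma>\<^sup>d\<close> with \<open>\<gamma> = exp (1/144) \<cdot> 143/144 < 1\<close>, independently of \<open>\<delta>\<close>.
\<close>

lemma exp_le_quadratic:
  fixes y :: real
  assumes "\<bar>y\<bar> \<le> 1"
  shows "exp y \<le> 1 + y + y\<^sup>2"
proof (cases "0 \<le> y")
  case True
  then show ?thesis using exp_bound[of y] assms by auto
next
  case False
  then have "exp y \<le> 1 / (1 - y)"
    using exp_ge_add_one_self[of "-y"] by (simp add: exp_minus field_simps)
  also have "\<dots> \<le> 1 + y + y\<^sup>2"
    using False mult_nonpos_nonneg[of y "y * y"]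
    by (simp add: divide_simps power2_eq_square algebra_simps)
  finally show ?thesis .
qed

lemma (in product_sigma_finite) emeasure_le_prod_nn_integral:
  assumes "finite I" and "B \<in> sets (Pi\<^sub>M I M)"
    and "\<And>i. i \<in> I \<Longrightarrow> f i \<in> borel_measurable (M i)"
    and "\<And>x. x \<in> B \<Longrightarrow> 1 \<le> (\<Prod>i\<in>I. f i (x i))"
  shows "emeasure (Pi\<^sub>M I M) B \<le> (\<Prod>i\<in>I. integral\<^sup>N (M i) (f i))"
proof -
  have "emeasure (Pi\<^sub>M I M) B = (\<integral>\<^sup>+ x. indicator B x \<partial>Pi\<^sub>M I M)"
    using assms(2) by simp
  also have "\<dots> \<le> (\<integral>\<^sup>+ x. (\<Prod>i\<in>I. f i (x i)) \<partial>Pi\<^sub>M I M)"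
    by (intro nn_integral_mono) (use assms(4) in \<open>auto split: split_indicator\<close>)
  also have "\<dots> = (\<Prod>i\<in>I. integral\<^sup>N (M i) (f i))"
    by (rule product_nn_integral_prod) (use assms(1,3) in auto)
  finally show ?thesis .
qed

lemma convex_combination_le_imp_ex_le:
  fixes w g :: "nat \<Rightarrow> real"
  assumes "\<forall>i<n. 0 \<le> w i" and "(\<Sum>i<n. w i) = 1" and "(\<Sum>i<n. w i * g i) \<le> c"
  shows "\<exists>i<n. g i \<le> c"
proof (rule ccontr)
  assume "\<not> ?thesis"
  then have gt: "c < g i" if "i < n" for i
    using that by auto
  have "\<exists>k<n. 0 < w k"
  proof (rule ccontr)
    assume "\<not> ?thesis"
    then have "(\<Sum>i<n. w i) \<le> 0"
      by (intro sum_nonpos) force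
    with assms(2) show False by simp
  qed
  then obtain k where k: "k < n" "0 < w k"
    by blast
  have "0 < (\<Sum>i<n. w i * (g i - c))"
    by (rule sum_pos2[of _ k]) (use k gt assms(1) in \<open>auto intro!: mult_nonneg_nonneg simp: less_imp_le\<close>)
  also have "\<dots> = (\<Sum>i<n. w i * g i) - c"
    using assms(2) by (simp add: right_diff_distrib sum_subtractf flip: sum_distrib_right)
  finally show False using assms(3) by simp
qed

lemma unit_cube_memD: "x \<in> unit_cube d \<Longrightarrow> j < d \<Longrightarrow> x j \<in> {0..1}"
  unfolding unit_cube_def by (erule PiE_mem) simp

lemma thicken_imp_close_point:
  assumes "\<delta> < 1/12" and "x \<in> thicken d \<delta> A"
  shows "\<exists>a\<in>A. dist_d d x a \<le> sqrt (real d) / 12"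
proof -
  \<comment> \<open>for \<open>d = 0\<close> the slack \<open>(1/12 - \<delta>)\<surd>d\<close> vanishes, but then every distance is \<open>0\<close>\<close>
  define e where "e = (1/12 - \<delta>) * sqrt (real d) + (if d = 0 then 1 else 0)"
  have "0 < e"
    using assms(1) unfolding e_def by (cases "d = 0") (auto intro: add_pos_nonneg)
  then obtain a where "a \<in> A" and a: "dist_d d x a < \<delta> * sqrt (real d) + e"
    using assms(2) unfolding thicken_def setdist_le_def by blast
  moreover have "dist_d d x a \<le> sqrt (real d) / 12"
  proof (cases "d = 0")
    case True
    then show ?thesis by (simp add: dist_d_def)
  next
    case False
    then show ?thesis using a unfolding e_def by (simp add: algebra_simps)
  qed
  ultimately show ?thesis by blast
qed

definition centre_pairing :: "real \<Rightarrow> real \<Rightarrow> real" where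
  "centre_pairing b t = (t - b) * (t - 1/2)"

definition pairing_sublevel :: "nat \<Rightarrow> (nat \<Rightarrow> real) \<Rightarrow> (nat \<Rightarrow> real) set" where
  "pairing_sublevel d b = {x \<in> unit_cube d. (\<Sum>j<d. centre_pairing (b j) (x j)) \<le> real d / 24}"

lemma centre_pairing_sum_le:
  assumes "x \<in> unit_cube d" and "dist_d d x a \<le> sqrt (real d) / 12"
  shows "(\<Sum>j<d. centre_pairing (a j) (x j)) \<le> real d / 24"
proof -
  have centre: "L2_set (\<lambda>j. x j - 1/2) {..<d} \<le> sqrt (real d) / 2"
  proof -
    have square: "(x j - 1/2)\<^sup>2 \<le> 1/4" if "j < d" for j
    proof -
      have "0 \<le> x j * (1 - x j)"
        using unit_cube_memD[OF assms(1) that] by simp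
      moreover have "(x j - 1/2)\<^sup>2 = 1/4 - x j * (1 - x j)"
        by (simp add: power2_eq_square algebra_simps)
      ultimately show ?thesis by simp
    qed
    have "(\<Sum>j<d. (x j - 1/2)\<^sup>2) \<le> real d / 4"
      using sum_mono[of "{..<d}" "\<lambda>j. (x j - 1/2)\<^sup>2" "\<lambda>_. 1/4"] square by simp
    then have "sqrt (\<Sum>j<d. (x j - 1/2)\<^sup>2) \<le> sqrt (real d / 4)"
      by (rule real_sqrt_le_mono)
    then show ?thesis
      unfolding L2_set_def by (simp add: real_sqrt_divide)
  qed
  have "(\<Sum>j<d. centre_pairing (a j) (x j)) \<le> (\<Sum>j<d. \<bar>x j - a j\<bar> * \<bar>x j - 1/2\<bar>)"
    unfolding centre_pairing_def by (intro sum_mono) (simp flip: abs_mult)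
  also have "\<dots> \<le> L2_set (\<lambda>j. x j - a j) {..<d} * L2_set (\<lambda>j. x j - 1/2) {..<d}"
    by (rule L2_set_mult_ineq)
  also have "\<dots> \<le> (sqrt (real d) / 12) * (sqrt (real d) / 2)"
    using assms(2) centre
    by (intro mult_mono) (simp_all add: dist_d_def L2_set_def[symmetric] L2_set_nonneg)
  also have "\<dots> = real d / 24"
    by simp
  finally show ?thesis .
qed

lemma centre_pairing_sum_convex:
  assumes "(\<Sum>i<n. w i) = 1"
  shows "(\<Sum>j<d. centre_pairing (\<Sum>i<n. w i * p i j) (x j))
       = (\<Sum>i<n. w i * (\<Sum>j<d. centre_pairing (p i j) (x j)))"
proof -
  have "centre_pairing (\<Sum>i<n. w i * p i j) t = (\<Sum>i<n. w i * centre_pairing (p i j) t)" for j t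
  proof -
    have "(\<Sum>i<n. w i * centre_pairing (p i j) t) = (\<Sum>i<n. (w i * t - w i * p i j) * (t - 1/2))"
      unfolding centre_pairing_def by (simp only: mult.assoc[symmetric] right_diff_distrib)
    also have "\<dots> = ((\<Sum>i<n. w i) * t - (\<Sum>i<n. w i * p i j)) * (t - 1/2)"
      by (simp add: sum_subtractf flip: sum_distrib_right)
    finally show ?thesis
      using assms by (simp add: centre_pairing_def)
  qed
  then show ?thesis
    by (simp add: sum_distrib_left sum.swap[of _ "{..<n}"])
qed

lemma thicken_conv_pts_subset:
  assumes "\<delta> < 1/12"
  shows "thicken d \<delta> (conv_pts d n p) \<inter> unit_cube d \<subseteq> (\<Union>i<n. pairing_sublevel d (p i))"
proof
  fix x assume x: "x \<in> thicken d \<delta> (conv_pts d n p) \<inter> unit_cube d"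
  then obtain a where "a \<in> conv_pts d n p" and close: "dist_d d x a \<le> sqrt (real d) / 12"
    using thicken_imp_close_point[OF assms] by blast
  then obtain w where a: "a = restrict (\<lambda>j. \<Sum>i<n. w i * p i j) {..<d}"
    and w0: "\<forall>i<n. 0 \<le> w i" and w1: "(\<Sum>i<n. w i) = 1"
    unfolding conv_pts_def by blast
  have "(\<Sum>j<d. centre_pairing (a j) (x j)) \<le> real d / 24"
    using centre_pairing_sum_le x close by blast
  also have "(\<Sum>j<d. centre_pairing (a j) (x j))
      = (\<Sum>i<n. w i * (\<Sum>j<d. centre_pairing (p i j) (x j)))"
    unfolding a using centre_pairing_sum_convex[OF w1] by simp
  finally have "(\<Sum>i<n. w i * (\<Sum>j<d. centre_pairing (p i j) (x j))) \<le> real d / 24" .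
  from convex_combination_le_imp_ex_le[OF w0 w1 this]
  obtain i where "i < n" "(\<Sum>j<d. centre_pairing (p i j) (x j)) \<le> real d / 24"
    by blast
  then show "x \<in> (\<Union>i<n. pairing_sublevel d (p i))"
    using x unfolding pairing_sublevel_def by blast
qed

definition gamma_bound :: real where
  "gamma_bound = exp (1/144) * (143/144)"

lemma gamma_bound_pos: "0 < gamma_bound"
  unfolding gamma_bound_def by simp

lemma gamma_bound_less_one: "gamma_bound < 1"
proof -
  have "exp (1/144::real) \<le> 1 + 1/144 + (1/144)\<^sup>2"
    by (rule exp_bound) auto
  then have "gamma_bound \<le> (1 + 1/144 + (1/144)\<^sup>2) * (143/144)"
    unfolding gamma_bound_def by simp
  also have "\<dots> < 1"
    by (simp add: power2_eq_square)
  finally show ?thesis .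
qed

text \<open>By \<open>exp y \<le> 1 + y + y\<^sup>2\<close> and \<open>|centre_pairing b t / 6| \<le> 1/12\<close>, this majorises
  \<open>exp (1/144 - centre_pairing b t / 6)\<close> on \<open>[0,1]\<close>; its integral over \<open>[0,1]\<close> is \<open>gamma_bound\<close>.\<close>

definition chernoff_majorant :: "real \<Rightarrow> real \<Rightarrow> real" where
  "chernoff_majorant b t = exp (1/144) * (145/144 - centre_pairing b t / 6)"

lemma centre_pairing_bound:
  assumes "b \<in> {0..1}" and "t \<in> {0..1}"
  shows "\<bar>centre_pairing b t\<bar> \<le> 1/2"
proof -
  have "\<bar>t - b\<bar> * \<bar>t - 1/2\<bar> \<le> 1 * (1/2)"
    using assms by (intro mult_mono) (auto simp: abs_if)
  then show ?thesis
    unfolding centre_pairing_def abs_mult by simp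
qed

lemma chernoff_majorant_nonneg: "b \<in> {0..1} \<Longrightarrow> t \<in> {0..1} \<Longrightarrow> 0 \<le> chernoff_majorant b t"
  using centre_pairing_bound[of b t] unfolding chernoff_majorant_def by (auto simp: abs_le_iff)

lemma exp_le_chernoff_majorant:
  assumes "b \<in> {0..1}" and "t \<in> {0..1}"
  shows "exp (1/144 - centre_pairing b t / 6) \<le> chernoff_majorant b t"
proof -
  define y where "y = - centre_pairing b t / 6"
  have "\<bar>y\<bar> \<le> 1/12"
    using centre_pairing_bound[OF assms] unfolding y_def by simp
  then have "y\<^sup>2 \<le> (1/12)\<^sup>2"
    by (metis abs_ge_zero power2_abs power_mono)
  then have "exp y \<le> 145/144 + y"
    using exp_le_quadratic[of y] \<open>\<bar>y\<bar> \<le> 1/12\<close> by (simp add: power2_eq_square)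
  then have "exp (1/144) * exp y \<le> exp (1/144) * (145/144 + y)"
    by simp
  then show ?thesis
    unfolding chernoff_majorant_def y_def by (simp add: exp_add[symmetric])
qed

lemma chernoff_majorant_integral: "(chernoff_majorant b has_integral gamma_bound) {0..1}"
proof -
  define G where
    "G t = exp (1/144) * ((145/144) * t - (t^3/3 - (b + 1/2) * t\<^sup>2/2 + b * t/2) / 6)" for t
  have "(chernoff_majorant b has_integral (G 1 - G 0)) {0..1}"
  proof (rule fundamental_theorem_of_calculus)
    fix t :: real
    have "(G has_real_derivative chernoff_majorant b t) (at t within {0..1})"
      unfolding G_def chernoff_majorant_def centre_pairing_def
      by (auto intro!: derivative_eq_intros) (simp add: algebra_simps power2_eq_square divide_simps)
    then show "(G has_vector_derivative chernoff_majorant b t) (at t within {0..1})"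
      by (simp add: has_real_derivative_iff_has_vector_derivative)
  qed simp
  moreover have "G 1 - G 0 = gamma_bound"
    unfolding G_def gamma_bound_def by (simp add: algebra_simps)
  ultimately show ?thesis by simp
qed

lemma pairing_sublevel_sets: "pairing_sublevel d b \<in> sets (lebesgue_d d)"
proof -
  have cube: "unit_cube d \<in> sets (lebesgue_d d)"
    unfolding unit_cube_def lebesgue_d_def by (rule sets_PiM_I_finite) auto
  have level: "{x \<in> space (lebesgue_d d). (\<Sum>j<d. centre_pairing (b j) (x j)) \<le> real d / 24}
      \<in> sets (lebesgue_d d)"
    unfolding lebesgue_d_def centre_pairing_def by measurable
  have "unit_cube d \<subseteq> space (lebesgue_d d)"
    unfolding unit_cube_def lebesgue_d_def space_PiM by (auto simp: PiE_def Pi_def)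
  then have "pairing_sublevel d b = unit_cube d \<inter>
      {x \<in> space (lebesgue_d d). (\<Sum>j<d. centre_pairing (b j) (x j)) \<le> real d / 24}"
    unfolding pairing_sublevel_def by auto
  then show ?thesis
    using cube level by (simp only: sets.Int)
qed

lemma emeasure_pairing_sublevel_le:
  assumes "b \<in> unit_cube d"
  shows "emeasure (lebesgue_d d) (pairing_sublevel d b) \<le> ennreal (gamma_bound ^ d)"
proof -
  interpret product_sigma_finite "\<lambda>_::nat. lborel :: real measure" by standard
  define F where "F j t = ennreal (chernoff_majorant (b j) t) * indicator {0..1::real} t" for j t
  have b: "b j \<in> {0..1}" if "j < d" for j
    using unit_cube_memD[OF assms that] .
  have measurable: "F j \<in> borel_measurable lborel" for j
    unfolding F_def chernoff_majorant_def centre_pairing_def by measurable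
  have "1 \<le> (\<Prod>j<d. F j (x j))" if x: "x \<in> pairing_sublevel d b" for x
  proof -
    have xj: "x j \<in> {0..1}" if "j < d" for j
      using x that unfolding pairing_sublevel_def by (auto dest: unit_cube_memD)
    have "1 \<le> exp (\<Sum>j<d. 1/144 - centre_pairing (b j) (x j) / 6)"
      using x unfolding pairing_sublevel_def
      by (simp add: sum_subtractf flip: sum_divide_distrib)
    also have "\<dots> = (\<Prod>j<d. exp (1/144 - centre_pairing (b j) (x j) / 6))"
      by (simp add: exp_sum)
    also have "\<dots> \<le> (\<Prod>j<d. chernoff_majorant (b j) (x j))"
      by (rule prod_mono) (use xj b exp_le_chernoff_majorant in auto)
    finally have "1 \<le> (\<Prod>j<d. chernoff_majorant (b j) (x j))" .
    moreover have "(\<Prod>j<d. F j (x j)) = ennreal (\<Prod>j<d. chernoff_majorant (b j) (x j))"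
      unfolding F_def using xj b
      by (subst prod_ennreal[symmetric]) (auto intro!: chernoff_majorant_nonneg prod.cong)
    ultimately show ?thesis
      by (metis ennreal_1 ennreal_leI)
  qed
  then have "emeasure (lebesgue_d d) (pairing_sublevel d b) \<le> (\<Prod>j<d. integral\<^sup>N lborel (F j))"
    unfolding lebesgue_d_def
    by (intro emeasure_le_prod_nn_integral)
      (use pairing_sublevel_sets[of d b] measurable in \<open>auto simp: lebesgue_d_def\<close>)
  also have "\<dots> = (\<Prod>j<d. ennreal gamma_bound)"
    unfolding F_def
    by (intro prod.cong refl nn_integral_has_integral_lebesgue' chernoff_majorant_integral)
      (use b chernoff_majorant_nonneg in auto)
  also have "\<dots> = ennreal (gamma_bound ^ d)"
    using gamma_bound_pos by (simp add: ennreal_power)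
  finally show ?thesis .
qed

lemma measure_thicken_conv_pts_le:
  assumes "\<delta> < 1/12" and "\<forall>i<n. p i \<in> unit_cube d"
  shows "measure (lebesgue_d d) (thicken d \<delta> (conv_pts d n p) \<inter> unit_cube d) \<le> real n * gamma_bound ^ d"
proof -
  let ?M = "lebesgue_d d"
  have sets: "pairing_sublevel d (p i) \<in> sets ?M" for i
    by (rule pairing_sublevel_sets)
  have "emeasure ?M (thicken d \<delta> (conv_pts d n p) \<inter> unit_cube d)
      \<le> emeasure ?M (\<Union>i<n. pairing_sublevel d (p i))"
    by (intro emeasure_mono thicken_conv_pts_subset assms(1)) (use sets in auto)
  also have "\<dots> \<le> (\<Sum>i<n. emeasure ?M (pairing_sublevel d (p i)))"
    by (rule emeasure_subadditive_finite) (use sets in auto)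
  also have "\<dots> \<le> (\<Sum>i<n. ennreal (gamma_bound ^ d))"
    by (intro sum_mono emeasure_pairing_sublevel_le) (use assms(2) in auto)
  also have "\<dots> = ennreal (real n * gamma_bound ^ d)"
    using gamma_bound_pos by (simp add: ennreal_of_nat_eq_real_of_nat ennreal_mult)
  finally show ?thesis
    unfolding measure_def using gamma_bound_pos by (simp add: enn2real_leI)
qed

theorem theorem2p3:
  fixes \<delta> :: real
  assumes "0 < \<delta>" and "\<delta> < 1/12"
  shows "\<exists>\<gamma>::real. 0 < \<gamma> \<and> \<gamma> < 1 \<and>
    (\<forall>(d::nat) (n::nat) (p::nat \<Rightarrow> nat \<Rightarrow> real).
       (\<forall>i<n. p i \<in> unit_cube d) \<longrightarrow>
       measure (lebesgue_d d) (thicken d \<delta> (conv_pts d n p) \<inter> unit_cube d)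
         \<le> real n * (real d + 1) * \<gamma> ^ d)"
proof (intro exI conjI allI impI)
  show "0 < gamma_bound" "gamma_bound < 1"
    by (fact gamma_bound_pos, fact gamma_bound_less_one)
  fix d n :: nat and p :: "nat \<Rightarrow> nat \<Rightarrow> real"
  assume "\<forall>i<n. p i \<in> unit_cube d"
  then have "measure (lebesgue_d d) (thicken d \<delta> (conv_pts d n p) \<inter> unit_cube d)
      \<le> real n * gamma_bound ^ d"
    using assms(2) by (intro measure_thicken_conv_pts_le) auto
  also have "\<dots> \<le> real n * (real d + 1) * gamma_bound ^ d"
    using gamma_bound_pos mult_left_mono[of 1 "real d + 1" "real n"] by (intro mult_right_mono) auto
  finally show "measure (lebesgue_d d) (thicken d \<delta> (conv_pts d n p) \<inter> unit_cube d)
      \<le> real n * (real d + 1) * gamma_bound ^ d" .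
qed

end
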